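(* Let $f$ be an L-additive arithmetic function whose associated completely multiplicative function $h_f$ is nonzero-valued, let $\Lambda_f$ be its generalized von Mangoldt function, and let $g$ be a completely additive arithmetic function. Then for every positive integer $n$, $$(\Lambda_f\ast g)(n)=\frac{f(n)g(n)}{h_f(n)}-(1\ast g\Lambda_f)(n).$$
   Context: An arithmetic function $f:\mathbb{N}\to\mathbb{C}$ is L-additive if there is a completely multiplicative function $h_f$ such that $f(mn)=f(m)h_f(n)+f(n)h_f(m)$ for all positive integers $m,n$; such an $h_f$ is fixed. $\Lambda_f(n)=\frac{f(p)}{h_f(p)}$ if $n=p^k$ for some prime $p$ and integer $k\geq1$, and $0$ otherwise. $g$ completely additive means $g(mn)=g(m)+g(n)$ for all $m,n$. $1$ is the constant function $1$, $\ast$ is Dirichlet convolution $(F\ast G)(n)=\sum_{d\mid n}F(d)G(n/d)$, and $g\Lambda_f$ is the pointwise product. *)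

theory Defs
  imports Complex_Main "HOL-Computational_Algebra.Primes"
begin

text \<open>Arithmetic functions are modelled as functions nat => complex; only their
values at positive integers matter.\<close>

definition completely_multiplicative :: "(nat \<Rightarrow> complex) \<Rightarrow> bool" where
  "completely_multiplicative h \<longleftrightarrow> h 1 = 1 \<and> (\<forall>m n. m > 0 \<longrightarrow> n > 0 \<longrightarrow> h (m * n) = h m * h n)"

definition completely_additive :: "(nat \<Rightarrow> complex) \<Rightarrow> bool" where
  "completely_additive g \<longleftrightarrow> (\<forall>m n. m > 0 \<longrightarrow> n > 0 \<longrightarrow> g (m * n) = g m + g n)"

definition L_additive_wrt :: "(nat \<Rightarrow> complex) \<Rightarrow> (nat \<Rightarrow> complex) \<Rightarrow> bool" where
  "L_additive_wrt f h \<longleftrightarrow> completely_multiplicative h \<and>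
     (\<forall>m n. m > 0 \<longrightarrow> n > 0 \<longrightarrow> f (m * n) = f m * h n + f n * h m)"

definition gen_mangoldt :: "(nat \<Rightarrow> complex) \<Rightarrow> (nat \<Rightarrow> complex) \<Rightarrow> nat \<Rightarrow> complex" where
  "gen_mangoldt f h n =
     (if \<exists>p k. prime p \<and> k \<ge> 1 \<and> n = p ^ k
      then f (THE p. prime p \<and> (\<exists>k. k \<ge> 1 \<and> n = p ^ k)) / h (THE p. prime p \<and> (\<exists>k. k \<ge> 1 \<and> n = p ^ k))
      else 0)"

definition dirichlet_conv :: "(nat \<Rightarrow> complex) \<Rightarrow> (nat \<Rightarrow> complex) \<Rightarrow> nat \<Rightarrow> complex" where
  "dirichlet_conv F G n = (\<Sum>d | d dvd n. F d * G (n div d))"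

end

theory Submission
  imports Defs
begin

text \<open>With F = f / h, which is completely additive because h is completely multiplicative
  and nonvanishing, the divisor sum of \<Lambda>_f at n is F n: multiplying n by a prime p adds
  exactly one new prime-power divisor, a power of p, contributing F p.
  For a completely additive g, g(n/d) + g(d) = g(n), so (\<Lambda>_f * g)(n) + (1 * g\<Lambda>_f)(n)
  is g(n) times that divisor sum.\<close>

lemma gen_mangoldt_prime_power:
  assumes "prime (p::nat)" "k \<ge> 1"
  shows "gen_mangoldt f h (p ^ k) = f p / h p"
proof -
  have "(THE q. prime q \<and> (\<exists>j. j \<ge> 1 \<and> p ^ k = q ^ j)) = p"
  proof (rule the_equality)
    show "prime p \<and> (\<exists>j. j \<ge> 1 \<and> p ^ k = p ^ j)" using assms by blast
  next
    fix q assume "prime q \<and> (\<exists>j. j \<ge> 1 \<and> p ^ k = q ^ j)"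
    then show "q = p" using prime_power_inj'(1)[of p q k] assms by auto
  qed
  then show ?thesis unfolding gen_mangoldt_def using assms by auto
qed

lemma gen_mangoldt_not_prime_power:
  assumes "\<not> (\<exists>p k. prime (p::nat) \<and> k \<ge> 1 \<and> d = p ^ k)"
  shows "gen_mangoldt f h d = 0"
  using assms unfolding gen_mangoldt_def by (simp only: if_False)

lemma gen_mangoldt_1 [simp]: "gen_mangoldt f h 1 = 0"
  by (rule gen_mangoldt_not_prime_power) (auto simp: nat_power_eq_Suc_0_iff dest: sym)

lemma completely_additive_1:
  assumes "completely_additive g"
  shows "g 1 = 0"
  using assms unfolding completely_additive_def by (metis add_cancel_right_right mult_1 zero_less_one)

lemma completely_additive_divisor:
  assumes "completely_additive g" "d dvd n" "n > 0"
  shows "g (n div d) + g d = g n"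
proof -
  have "d > 0" "n div d > 0" using assms(2,3) by (auto intro: Nat.gr0I simp: dvd_div_eq_0_iff)
  moreover have "n = (n div d) * d" using assms(2) by simp
  ultimately show ?thesis using assms(1) unfolding completely_additive_def by metis
qed

lemma completely_additive_L_additive_quotient:
  assumes "L_additive_wrt f h" "\<And>m. m > 0 \<Longrightarrow> h m \<noteq> 0"
  shows "completely_additive (\<lambda>n. f n / h n)"
  unfolding completely_additive_def
proof (intro allI impI)
  fix a b :: nat assume ab: "a > 0" "b > 0"
  have "f (a * b) = f a * h b + f b * h a" "h (a * b) = h a * h b"
    using assms(1) ab unfolding L_additive_wrt_def completely_multiplicative_def by auto
  moreover have "h a \<noteq> 0" "h b \<noteq> 0" using assms(2) ab by auto
  ultimately show "f (a * b) / h (a * b) = f a / h a + f b / h b"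
    by (simp add: field_simps)
qed

lemma prime_power_dvd_prime_times_not_dvd:
  fixes p q m k :: nat
  assumes "prime p" "m > 0" "prime q" "q ^ k dvd p * m" "\<not> q ^ k dvd m"
  shows "q = p \<and> k = Suc (multiplicity p m)"
proof -
  have "q = p"
  proof (rule ccontr)
    assume "q \<noteq> p"
    then have "coprime (q ^ k) p" using assms(1,3) by (simp add: primes_coprime)
    then show False using assms(4,5) coprime_dvd_mult_right_iff by blast
  qed
  have p: "p \<noteq> 0" "\<not> is_unit p" using assms(1) by auto
  have "k \<le> multiplicity p (p * m)" "\<not> k \<le> multiplicity p m"
    using assms(2,4,5) \<open>q = p\<close> power_dvd_iff_le_multiplicity[OF _ p(2)] p(1) by auto
  moreover have "multiplicity p (p * m) = Suc (multiplicity p m)"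
    using multiplicity_times_same[of m p] p assms(2) by simp
  ultimately show ?thesis using \<open>q = p\<close> by simp
qed

lemma sum_new_divisors_gen_mangoldt:
  fixes p m :: nat
  assumes "prime p" "m > 0"
  shows "(\<Sum>d \<in> {d. d dvd p * m} - {d. d dvd m}. gen_mangoldt f h d) = f p / h p"
proof -
  define v where "v = Suc (multiplicity p m)"
  have "p ^ v dvd p * m"
    using multiplicity_dvd[of p m] by (simp add: v_def)
  moreover have "\<not> p ^ v dvd m"
    using power_dvd_iff_le_multiplicity[of m p v] assms prime_gt_1_nat[OF assms(1)]
    by (simp add: v_def)
  ultimately have "(\<Sum>d \<in> {d. d dvd p * m} - {d. d dvd m}. gen_mangoldt f h d)
        = (\<Sum>d \<in> {p ^ v}. gen_mangoldt f h d)"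
  proof (intro sum.mono_neutral_right ballI)
    fix d assume d: "d \<in> {d. d dvd p * m} - {d. d dvd m} - {p ^ v}"
    show "gen_mangoldt f h d = 0"
    proof (rule gen_mangoldt_not_prime_power, clarify)
      fix q k assume "prime q" "d = q ^ k"
      then show False
        using d prime_power_dvd_prime_times_not_dvd[OF assms \<open>prime q\<close>, of k] by (auto simp: v_def)
    qed
  qed (use assms in \<open>auto simp: prime_gt_0_nat\<close>)
  also have "\<dots> = f p / h p"
    using gen_mangoldt_prime_power[OF assms(1), of v] by (simp del: power_Suc add: v_def)
  finally show ?thesis .
qed

lemma sum_divisors_gen_mangoldt:
  assumes "completely_additive (\<lambda>n. f n / h n)" "n > 0"
  shows "(\<Sum>d | d dvd n. gen_mangoldt f h d) = f n / h n"
  using assms(2)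
proof (induction n rule: less_induct)
  case (less n)
  show ?case
  proof (cases "n = 1")
    case True
    then show ?thesis using completely_additive_1[OF assms(1)] gen_mangoldt_1[of f h] by simp
  next
    case False
    then obtain p where p: "prime p" "p dvd n" using prime_factor_nat[of n] by auto
    then obtain m where n: "n = p * m" by blast
    have "m > 0" "m < n" using n less.prems prime_gt_1_nat[OF p(1)] by auto
    have "(\<Sum>d | d dvd n. gen_mangoldt f h d)
          = (\<Sum>d | d dvd m. gen_mangoldt f h d)
            + (\<Sum>d \<in> {d. d dvd n} - {d. d dvd m}. gen_mangoldt f h d)"
      using sum.subset_diff[of "{d. d dvd m}" "{d. d dvd n}"] n less.prems
      by (auto simp: add.commute intro: dvd_mult)
    also have "\<dots> = f m / h m + f p / h p"
      using less.IH[OF \<open>m < n\<close> \<open>m > 0\<close>] sum_new_divisors_gen_mangoldt[OF p(1) \<open>m > 0\<close>] n by simp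
    also have "\<dots> = f n / h n"
      using assms(1) p(1) \<open>m > 0\<close> n unfolding completely_additive_def by (simp add: prime_gt_0_nat)
    finally show ?thesis .
  qed
qed

lemma sum_divisors_reflect:
  assumes "(n::nat) > 0"
  shows "(\<Sum>d | d dvd n. G (n div d)) = (\<Sum>d | d dvd n. (G d :: 'a::comm_monoid_add))"
  by (rule sum.reindex_bij_witness[where i="\<lambda>d. n div d" and j="\<lambda>d. n div d"])
     (use assms in \<open>auto simp: div_div_eq_right dvd_div_eq_mult\<close>)

lemma dirichlet_conv_completely_additive:
  assumes "completely_additive g" "n > 0"
  shows "dirichlet_conv F g n + dirichlet_conv (\<lambda>_. 1) (\<lambda>k. g k * F k) n
         = (\<Sum>d | d dvd n. F d) * g n"
proof -
  have "dirichlet_conv F g n + dirichlet_conv (\<lambda>_. 1) (\<lambda>k. g k * F k) n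
      = (\<Sum>d | d dvd n. F d * g (n div d)) + (\<Sum>d | d dvd n. g d * F d)"
    unfolding dirichlet_conv_def using sum_divisors_reflect[OF assms(2), of "\<lambda>k. g k * F k"]
    by simp
  also have "\<dots> = (\<Sum>d | d dvd n. F d * (g (n div d) + g d))"
    by (simp add: sum.distrib algebra_simps)
  also have "\<dots> = (\<Sum>d | d dvd n. F d * g n)"
    using completely_additive_divisor[OF assms(1) _ assms(2)] by (intro sum.cong) auto
  finally show ?thesis by (simp add: sum_distrib_right)
qed

theorem theorem2p4:
  fixes f h g :: "nat \<Rightarrow> complex" and n :: nat
  assumes "L_additive_wrt f h"
    and "\<And>m. m > 0 \<Longrightarrow> h m \<noteq> 0"
    and "completely_additive g"
    and "n > 0"
  shows "dirichlet_conv (gen_mangoldt f h) g n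
         = f n * g n / h n - dirichlet_conv (\<lambda>_. 1) (\<lambda>k. g k * gen_mangoldt f h k) n"
proof -
  have "(\<Sum>d | d dvd n. gen_mangoldt f h d) = f n / h n"
    using sum_divisors_gen_mangoldt[OF completely_additive_L_additive_quotient[OF assms(1,2)] assms(4)] .
  then show ?thesis
    using dirichlet_conv_completely_additive[OF assms(3,4), of "gen_mangoldt f h"]
    by (simp add: eq_diff_eq)
qed

end
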